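(* Let $\omega>0$, $-\frac{\pi}{2}<\theta_1<\theta_2<0$, $\mathcal{C}=\{(\varphi,\theta)\in[0,2\pi)\times(\theta_1,\theta_2)\}$, and let $\psi_1\neq\psi_2$ be real constants. Given $\lambda\le 0$ and $\Upsilon\in\mathbb{R}$, let $\Psi_{\lambda,\Upsilon}$ be the unique solution of \[(\Psi'(\theta)\cos\theta)'=-\lambda\Psi(\theta)\cos\theta+\Upsilon\cos\theta-\omega\sin 2\theta,\ \theta\in(\theta_1,\theta_2),\qquad \Psi(\theta_1)=\psi_1,\ \Psi(\theta_2)=\psi_2,\] let $\mathbf{u}^*_{\lambda,\Upsilon}=u^*_{\lambda,\Upsilon}\mathbf{e}_\varphi$ with $u^*_{\lambda,\Upsilon}=-\Psi_{\lambda,\Upsilon}'$ be the corresponding steady zonal solution of the system below, and let $\Omega^*_{\lambda,\Upsilon}$ be its vorticity. Suppose that $\mathbf{u}(t)=u(t)\mathbf{e}_\varphi+v(t)\mathbf{e}_\theta$ is a time-dependent solution (with some pressure $p$) of \begin{align*} & u_t + \frac{uu_\varphi}{\cos\theta} + vu_\theta - uv\tan\theta - 2\omega v\sin\theta = -\frac{p_\varphi}{\cos\theta},\\ & v_t + \frac{uv_\varphi}{\cos\theta} + vv_\theta + u^2\tan\theta + 2\omega u\sin\theta = -p_\theta,\\ & u_\varphi + (v\cos\theta)_\theta = 0 \end{align*} in $\mathcal{C}$, with $v=0$ on $\{\theta=\theta_1\}\cup\{\theta=\theta_2\}$ for all $t\ge0$, with initial data $\mathbf{u}|_{t=0}=\mathbf{u}_0=u_0\mathbf{e}_\varphi+v_0\mathbf{e}_\theta$,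 and let $\Omega(t)$ denote its vorticity, with $\Omega|_{t=0}=\Omega_0$. Then for all $t\ge 0$, \[-\lambda\|\mathbf{u}(t)-\mathbf{u}^*_{\lambda,\Upsilon}\|^2_{L^2(\mathcal{C})}+\|\Omega(t)-\Omega^*_{\lambda,\Upsilon}\|^2_{L^2(\mathcal{C})}=-\lambda\|\mathbf{u}_0-\mathbf{u}^*_{\lambda,\Upsilon}\|^2_{L^2(\mathcal{C})}+\|\Omega_0-\Omega^*_{\lambda,\Upsilon}\|^2_{L^2(\mathcal{C})}.\]
   Context: Spherical coordinates $(\varphi,\theta)$ on the unit sphere: $(\varphi,\theta)\mapsto(\cos\varphi\cos\theta,\sin\varphi\cos\theta,\sin\theta)$, with unit tangent vectors $\mathbf{e}_\varphi,\mathbf{e}_\theta$; all functions are $2\pi$-periodic in $\varphi$. The area element is $d\sigma=\cos\theta\,d\varphi\,d\theta$, and $L^2(\mathcal{C})$ norms are taken with respect to $d\sigma$ (for a vector field $f\mathbf{e}_\varphi+g\mathbf{e}_\theta$, the pointwise norm is $\sqrt{f^2+g^2}$). The vorticity of $u\,\mathbf{e}_\varphi+v\,\mathbf{e}_\theta$ is $\Omega=\frac{1}{\cos\theta}[v_\varphi-(u\cos\theta)_\theta]$. The solution $\mathbf{u}$ is understood to be a classical (smooth) solution. *)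

theory Defs
  imports "HOL-Analysis.Analysis"
begin

(* Points (t, phi, theta) of time x longitude x latitude *)
type_synonym pt3 = "real \<times> real \<times> real"

definition dir3 :: "nat \<Rightarrow> pt3" where
  "dir3 i = (if i = 0 then (1,0,0) else if i = 1 then (0,1,0) else (0,0,1))"

definition pdiff3 :: "nat \<Rightarrow> (pt3 \<Rightarrow> real) \<Rightarrow> pt3 \<Rightarrow> real" where
  "pdiff3 i f x = deriv (\<lambda>s. f (x + s *\<^sub>R dir3 i)) 0"

(* C^infinity on an open set: all iterated partial derivatives are (Frechet) differentiable *)
definition smooth3_on :: "pt3 set \<Rightarrow> (pt3 \<Rightarrow> real) \<Rightarrow> bool" where
  "smooth3_on U f \<longleftrightarrow> open U \<and>
     (\<forall>ds. set ds \<subseteq> {0,1,2} \<longrightarrow> foldr pdiff3 ds f differentiable_on U)"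

definition d_t :: "(real \<Rightarrow> real \<Rightarrow> real \<Rightarrow> real) \<Rightarrow> real \<Rightarrow> real \<Rightarrow> real \<Rightarrow> real" where
  "d_t f t ph th = deriv (\<lambda>s. f s ph th) t"
definition d_phi :: "(real \<Rightarrow> real \<Rightarrow> real \<Rightarrow> real) \<Rightarrow> real \<Rightarrow> real \<Rightarrow> real \<Rightarrow> real" where
  "d_phi f t ph th = deriv (\<lambda>s. f t s th) ph"
definition d_theta :: "(real \<Rightarrow> real \<Rightarrow> real \<Rightarrow> real) \<Rightarrow> real \<Rightarrow> real \<Rightarrow> real \<Rightarrow> real" where
  "d_theta f t ph th = deriv (\<lambda>s. f t ph s) th"

definition vort :: "(real \<Rightarrow> real \<Rightarrow> real \<Rightarrow> real) \<Rightarrow> (real \<Rightarrow> real \<Rightarrow> real \<Rightarrow> real)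
    \<Rightarrow> real \<Rightarrow> real \<Rightarrow> real \<Rightarrow> real" where
  "vort u v t ph th = (1 / cos th) * (d_phi v t ph th - deriv (\<lambda>s. u t ph s * cos s) th)"

definition zonal_vort :: "(real \<Rightarrow> real) \<Rightarrow> real \<Rightarrow> real" where
  "zonal_vort us th = (1 / cos th) * (0 - deriv (\<lambda>s. us s * cos s) th)"

(* squared L^2 norm on C = [0,2pi) x (th1,th2) w.r.t. cos theta dphi dtheta
   of the vector field f e_phi + g e_theta (for a scalar take g = 0) *)
definition L2sq :: "real \<Rightarrow> real \<Rightarrow> (real \<Rightarrow> real \<Rightarrow> real) \<Rightarrow> (real \<Rightarrow> real \<Rightarrow> real) \<Rightarrow> real" where
  "L2sq th1 th2 f g = (LINT x : ({0..<2*pi} \<times> {th1<..<th2}) | lborel.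
       ((f (fst x) (snd x))\<^sup>2 + (g (fst x) (snd x))\<^sup>2) * cos (snd x))"

end

theory Submission
  imports Defs
begin

(* Write q = Omega + 2 omega sin theta for the absolute vorticity of the flow and
   q_star = - lam Psi + Ups for that of the steady zonal flow.  In Lamb form the momentum equations read
   u_t = q v - P_phi / cos theta and v_t = - q u - P_theta with the Bernoulli function
   P = p + (u^2 + v^2)/2, and cross-differentiation gives the transport equation
   cos theta q_t + (u q)_phi + (v cos theta q)_theta = 0.  Together with incompressibility and
   q_star' = - lam Psi', this turns the time derivative of the energy-Casimir density
   (- lam |u - u_star|^2 + (q - q_star)^2) cos theta into a divergence A_phi + B_theta.  The flux A is
   2 pi-periodic in phi and B carries the factor v, which vanishes on the boundary circles, so the
   integral of the density over the strip is constant in time. *)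

section \<open>Partial derivatives in three variables\<close>

abbreviation Dt :: "(pt3 \<Rightarrow> real) \<Rightarrow> pt3 \<Rightarrow> real" where "Dt \<equiv> pdiff3 0"
abbreviation Dph :: "(pt3 \<Rightarrow> real) \<Rightarrow> pt3 \<Rightarrow> real" where "Dph \<equiv> pdiff3 1"
abbreviation Dth :: "(pt3 \<Rightarrow> real) \<Rightarrow> pt3 \<Rightarrow> real" where "Dth \<equiv> pdiff3 2"
abbreviation lat :: "pt3 \<Rightarrow> real" where "lat x \<equiv> snd (snd x)"

lemma dir3_simps [simp]: "dir3 0 = (1,0,0)" "dir3 (Suc 0) = (0,1,0)" "dir3 2 = (0,0,1)"
  by (auto simp: dir3_def)

lemma norm_dir3: "i \<le> 2 \<Longrightarrow> norm (dir3 i) = 1"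
  by (auto simp: dir3_def norm_Pair)

lemma has_real_derivative_pdiff3:
  fixes F :: "pt3 \<Rightarrow> real"
  assumes "F differentiable (at (y + a *\<^sub>R dir3 i))"
  shows "((\<lambda>s. F (y + s *\<^sub>R dir3 i)) has_real_derivative pdiff3 i F (y + a *\<^sub>R dir3 i)) (at a)"
proof -
  obtain F' where F': "(F has_derivative F') (at (y + a *\<^sub>R dir3 i))"
    using assms by (auto simp: differentiable_def)
  have line: "((\<lambda>s. F (z + s *\<^sub>R dir3 i)) has_real_derivative F' (dir3 i)) (at b)"
    if "(F has_derivative F') (at (z + b *\<^sub>R dir3 i))" for z b
  proof -
    have "((F \<circ> (\<lambda>s. z + s *\<^sub>R dir3 i)) has_derivative (F' \<circ> (\<lambda>h. h *\<^sub>R dir3 i))) (at b)"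
      by (rule diff_chain_at) (use that in \<open>auto intro!: derivative_eq_intros\<close>)
    moreover have "F' \<circ> (\<lambda>h. h *\<^sub>R dir3 i) = (\<lambda>h. F' (dir3 i) * h)"
      using has_derivative_linear[OF F'] by (auto simp: linear_scale o_def)
    ultimately show ?thesis
      by (simp add: has_field_derivative_def o_def)
  qed
  have "pdiff3 i F (y + a *\<^sub>R dir3 i) = F' (dir3 i)"
    unfolding pdiff3_def by (rule DERIV_imp_deriv, rule line) (use F' in simp)
  then show ?thesis using line[OF F'] by simp
qed

lemma smooth3_on_imp_differentiable: "smooth3_on U F \<Longrightarrow> x \<in> U \<Longrightarrow> F differentiable (at x)"
  unfolding smooth3_on_def
  by (metis differentiable_on_def at_within_open empty_subsetI foldr_Nil id_apply set_empty)

lemma smooth3_on_imp_continuous_on: "smooth3_on U F \<Longrightarrow> continuous_on U F"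
  unfolding smooth3_on_def
  by (metis differentiable_imp_continuous_on empty_subsetI foldr_Nil id_apply set_empty)

lemma smooth3_on_pdiff3: "smooth3_on U F \<Longrightarrow> i \<le> 2 \<Longrightarrow> smooth3_on U (pdiff3 i F)"
  unfolding smooth3_on_def
proof (intro conjI allI impI)
  fix ds :: "nat list"
  assume F: "open U \<and> (\<forall>ds. set ds \<subseteq> {0, 1, 2} \<longrightarrow> foldr pdiff3 ds F differentiable_on U)"
    and "i \<le> 2" "set ds \<subseteq> {0,1,2}"
  then have "set (ds @ [i]) \<subseteq> {0,1,2}" by auto
  with F show "foldr pdiff3 ds (pdiff3 i F) differentiable_on U" by fastforce
qed auto

lemma partial_diff_eq_integral_mixed_partial:
  fixes f fx fy fyx :: "real \<Rightarrow> real \<Rightarrow> real"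
  assumes x: "x \<in> {a<..<b}" and y: "y \<in> {c..d}"
    and fx: "\<And>x y. x \<in> {a..b} \<Longrightarrow> y \<in> {c..d} \<Longrightarrow> ((\<lambda>x. f x y) has_real_derivative fx x y) (at x)"
    and fy: "\<And>x y. x \<in> {a..b} \<Longrightarrow> y \<in> {c..d} \<Longrightarrow> ((\<lambda>y. f x y) has_real_derivative fy x y) (at y)"
    and fyx: "\<And>x y. x \<in> {a..b} \<Longrightarrow> y \<in> {c..d} \<Longrightarrow> ((\<lambda>x. fy x y) has_real_derivative fyx x y) (at x)"
    and cont: "continuous_on ({a..b} \<times> {c..d}) (\<lambda>(x, y). fyx x y)"
  shows "fx x y - fx x c = integral {c..y} (fyx x)"
proof -
  have sub: "{c..y} \<subseteq> {c..d}" using y by auto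
  have ftc: "(fy x' has_integral (f x' y - f x' c)) {c..y}" if x': "x' \<in> {a..b}" for x'
  proof (rule fundamental_theorem_of_calculus)
    show "(f x' has_vector_derivative fy x' s) (at s within {c..y})" if "s \<in> {c..y}" for s
      using fy[OF x', of s] that sub
      by (auto intro: has_vector_derivative_at_within simp: has_real_derivative_iff_has_vector_derivative)
  qed (use y in auto)
  have "((\<lambda>x. integral (cbox c y) (fy x)) has_real_derivative integral (cbox c y) (fyx x))
      (at x within {a..b})"
  proof (rule leibniz_rule_field_derivative)
    show "((\<lambda>x. fy x s) has_real_derivative fyx x' s) (at x' within {a..b})"
      if "x' \<in> {a..b}" "s \<in> cbox c y" for x' s
      using fyx[of x' s] that sub by (auto intro: has_field_derivative_at_within)
    show "continuous_on ({a..b} \<times> cbox c y) (\<lambda>(x, t). fyx x t)"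
      by (rule continuous_on_subset[OF cont]) (use sub in auto)
  qed (use x ftc in auto)
  then have "((\<lambda>x. integral {c..y} (fy x)) has_real_derivative integral {c..y} (fyx x)) (at x)"
    using x by (simp add: at_within_Icc_at)
  then have "((\<lambda>x. f x y - f x c) has_real_derivative integral {c..y} (fyx x)) (at x)"
    by (rule has_field_derivative_transform_within_open[where S = "{a<..<b}"])
       (use x ftc in \<open>auto simp: integral_unique\<close>)
  moreover have "((\<lambda>x. f x y - f x c) has_real_derivative fx x y - fx x c) (at x)"
    using x y by (auto intro!: derivative_eq_intros fx)
  ultimately show ?thesis using DERIV_unique by blast
qed

lemma mixed_partials_eq:
  fixes f fx fy fxy fyx :: "real \<Rightarrow> real \<Rightarrow> real"
  assumes x: "x \<in> {a<..<b}" and y: "y \<in> {c<..<d}"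
    and fx: "\<And>x y. x \<in> {a..b} \<Longrightarrow> y \<in> {c..d} \<Longrightarrow> ((\<lambda>x. f x y) has_real_derivative fx x y) (at x)"
    and fy: "\<And>x y. x \<in> {a..b} \<Longrightarrow> y \<in> {c..d} \<Longrightarrow> ((\<lambda>y. f x y) has_real_derivative fy x y) (at y)"
    and fxy: "\<And>x y. x \<in> {a..b} \<Longrightarrow> y \<in> {c..d} \<Longrightarrow> ((\<lambda>y. fx x y) has_real_derivative fxy x y) (at y)"
    and fyx: "\<And>x y. x \<in> {a..b} \<Longrightarrow> y \<in> {c..d} \<Longrightarrow> ((\<lambda>x. fy x y) has_real_derivative fyx x y) (at x)"
    and cont: "continuous_on ({a..b} \<times> {c..d}) (\<lambda>(x, y). fyx x y)"
  shows "fxy x y = fyx x y"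
proof -
  have "continuous_on {c..d} (fyx x)"
    by (rule continuous_on_compose2[OF cont, where f = "\<lambda>y. (x, y)", simplified])
       (use x in \<open>auto intro!: continuous_intros\<close>)
  then have "((\<lambda>y. integral {c..y} (fyx x)) has_real_derivative fyx x y) (at y)"
    using integral_has_vector_derivative[of c d "fyx x" y] y
    by (simp add: has_real_derivative_iff_has_vector_derivative at_within_Icc_at)
  moreover have "((\<lambda>y. integral {c..y} (fyx x)) has_real_derivative fxy x y) (at y)"
  proof (rule has_field_derivative_transform_within_open[where S = "{c<..<d}"])
    show "((\<lambda>y. fx x y - fx x c) has_real_derivative fxy x y) (at y)"
      using x y by (auto intro!: derivative_eq_intros fxy)
    show "fx x s - fx x c = integral {c..s} (fyx x)" if "s \<in> {c<..<d}" for s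
      by (rule partial_diff_eq_integral_mixed_partial[OF x _ fx fy fyx cont]) (use that in auto)
  qed (use y in auto)
  ultimately show ?thesis using DERIV_unique by blast
qed

lemma plane_point_in_ball:
  assumes "i \<le> 2" "j \<le> 2" "\<bar>a\<bar> + \<bar>b\<bar> < e"
  shows "x + a *\<^sub>R dir3 i + b *\<^sub>R dir3 j \<in> ball x e"
proof -
  have "norm (a *\<^sub>R dir3 i + b *\<^sub>R dir3 j) \<le> \<bar>a\<bar> + \<bar>b\<bar>"
    using norm_triangle_ineq[of "a *\<^sub>R dir3 i" "b *\<^sub>R dir3 j"] norm_dir3 assms by simp
  with assms(3) show ?thesis
    by (simp add: dist_norm add.assoc norm_minus_commute add.commute)
qed

lemma pdiff3_commute:
  assumes F: "smooth3_on U F" and x: "x \<in> U" and ij: "i \<le> 2" "j \<le> 2"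
  shows "pdiff3 i (pdiff3 j F) x = pdiff3 j (pdiff3 i F) x"
proof -
  have "open U" using F by (simp add: smooth3_on_def)
  then obtain e where e: "e > 0" "ball x e \<subseteq> U"
    using x open_contains_ball by blast
  define r where "r = e / 3"
  define g where "g a b = x + a *\<^sub>R dir3 i + b *\<^sub>R dir3 j" for a b
  have r: "r > 0" using e by (simp add: r_def)
  have gU: "g a b \<in> U" if "a \<in> {-r..r}" "b \<in> {-r..r}" for a b
    using plane_point_in_ball[OF ij, of a b e x] that e by (auto simp: g_def r_def)
  have da: "((\<lambda>a. H (g a b)) has_real_derivative pdiff3 i H (g a b)) (at a)"
    and db: "((\<lambda>b. H (g a b)) has_real_derivative pdiff3 j H (g a b)) (at b)"
    if "smooth3_on U H" "a \<in> {-r..r}" "b \<in> {-r..r}" for H a b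
  proof -
    have ga: "g a' b = (x + b *\<^sub>R dir3 j) + a' *\<^sub>R dir3 i"
      and gb: "g a b' = (x + a *\<^sub>R dir3 i) + b' *\<^sub>R dir3 j" for a' b'
      by (simp_all add: g_def algebra_simps)
    have diff: "H differentiable (at (g a b))"
      using that gU smooth3_on_imp_differentiable by blast
    show "((\<lambda>a. H (g a b)) has_real_derivative pdiff3 i H (g a b)) (at a)"
      using diff unfolding ga by (rule has_real_derivative_pdiff3)
    show "((\<lambda>b. H (g a b)) has_real_derivative pdiff3 j H (g a b)) (at b)"
      using diff unfolding gb by (rule has_real_derivative_pdiff3)
  qed
  have cont: "continuous_on ({-r..r} \<times> {-r..r}) (\<lambda>(a, b). H (g a b))" if "smooth3_on U H" for H
  proof -
    have "continuous_on ({-r..r} \<times> {-r..r}) (H \<circ> (\<lambda>(a, b). g a b))"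
      by (rule continuous_on_compose, simp add: g_def split_beta continuous_intros,
          rule continuous_on_subset[OF smooth3_on_imp_continuous_on[OF that]]) (use gU in auto)
    then show ?thesis by (simp add: o_def split_beta)
  qed
  have Fi: "smooth3_on U (pdiff3 i F)" and Fj: "smooth3_on U (pdiff3 j F)"
    using smooth3_on_pdiff3 F ij by auto
  have "pdiff3 j (pdiff3 i F) (g 0 0) = pdiff3 i (pdiff3 j F) (g 0 0)"
  proof (rule mixed_partials_eq[where f = "\<lambda>a b. F (g a b)" and a = "-r" and b = r and c = "-r" and d = r
        and fx = "\<lambda>a b. pdiff3 i F (g a b)" and fy = "\<lambda>a b. pdiff3 j F (g a b)"
        and fxy = "\<lambda>a b. pdiff3 j (pdiff3 i F) (g a b)" and fyx = "\<lambda>a b. pdiff3 i (pdiff3 j F) (g a b)"])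
    show "continuous_on ({-r..r} \<times> {-r..r}) (\<lambda>(a, b). pdiff3 i (pdiff3 j F) (g a b))"
      by (rule cont, rule smooth3_on_pdiff3[OF Fj ij(1)])
  qed (use r in \<open>simp_all add: F Fi Fj da db\<close>)
  then show ?thesis by (simp add: g_def)
qed

lemma continuous_extension_from_continuous_derivative:
  fixes h g :: "real \<Rightarrow> real"
  assumes h: "\<And>x. x \<in> {a<..<b} \<Longrightarrow> (h has_real_derivative g x) (at x)"
    and g: "continuous_on {a..b} g"
  obtains H where "continuous_on {a..b} H" "\<And>x. x \<in> {a<..<b} \<Longrightarrow> h x = H x"
proof -
  define G where "G x = integral {a..x} g" for x
  have G: "(G has_real_derivative g x) (at x)" if "x \<in> {a<..<b}" for x
    using integral_has_vector_derivative[OF g, of x] that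
    by (simp add: G_def[abs_def] has_real_derivative_iff_has_vector_derivative at_within_Icc_at)
  have "\<exists>k. \<forall>x\<in>{a<..<b}. h x - G x = k"
  proof (rule has_field_derivative_zero_constant)
    show "((\<lambda>x. h x - G x) has_real_derivative 0) (at x within {a<..<b})" if "x \<in> {a<..<b}" for x
      using DERIV_diff[OF h[OF that] G[OF that]] by (simp add: has_field_derivative_at_within)
  qed simp
  then obtain k where "\<forall>x\<in>{a<..<b}. h x - G x = k" by blast
  then have "\<And>x. x \<in> {a<..<b} \<Longrightarrow> h x = G x + k" by force
  moreover have "continuous_on {a..b} (\<lambda>x. G x + k)"
    unfolding G_def
    by (intro continuous_intros indefinite_integral_continuous_1 integrable_continuous_real g)
  ultimately show ?thesis using that by blast
qed

lemma DERIV_unique_on_open: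
  assumes "(f has_real_derivative D) (at x)" "(g has_real_derivative E) (at x)"
    and "open S" "x \<in> S" "\<And>y. y \<in> S \<Longrightarrow> f y = g y"
  shows "D = E"
  by (metis assms DERIV_unique has_field_derivative_transform_within_open)

section \<open>Integrals over a rectangle\<close>

lemma L2sq_eq_integral_cbox:
  fixes h :: "real \<times> real \<Rightarrow> real"
  assumes h: "continuous_on (cbox (0, th1) (2*pi, th2)) h"
    and eq: "\<And>ph th. ph \<in> {0..<2*pi} \<Longrightarrow> th \<in> {th1<..<th2} \<Longrightarrow>
               ((f ph th)\<^sup>2 + (g ph th)\<^sup>2) * cos th = h (ph, th)"
  shows "L2sq th1 th2 f g = integral (cbox (0, th1) (2*pi, th2)) h"
proof -
  define A where "A = {0..<2*pi} \<times> {th1<..<th2}"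
  define C where "C = cbox (0, th1) (2*pi, th2)"
  have AC: "A \<subseteq> C" by (auto simp: A_def C_def cbox_Pair_eq)
  have A_sets: "A \<in> sets lborel"
  proof -
    have "A \<in> sets (borel \<Otimes>\<^sub>M borel :: (real \<times> real) measure)"
      unfolding A_def by (rule pair_measureI) auto
    then show ?thesis by (metis borel_prod sets_lborel)
  qed
  have "L2sq th1 th2 f g = (LINT x : A | lborel. h x)"
    unfolding L2sq_def set_lebesgue_integral_def A_def
    by (rule Bochner_Integration.integral_cong[OF refl]) (auto simp: indicator_def eq)
  also have "\<dots> = integral A h"
  proof (rule set_borel_integral_eq_integral)
    have "set_integrable lborel C h"
      unfolding set_integrable_def C_def by (rule borel_integrable_compact[OF compact_cbox h])
    then show "set_integrable lborel A h"
      by (rule set_integrable_subset) (use AC A_sets in auto)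
  qed
  also have "\<dots> = integral C h"
  proof (rule integral_spike_set)
    have "{x \<in> A - C. h x \<noteq> 0} = {}" using AC by auto
    then show "negligible {x \<in> A - C. h x \<noteq> 0}" by (metis negligible_empty)
    have "{x \<in> C - A. h x \<noteq> 0} \<subseteq>
        {x. (0,1) \<bullet> x = th1} \<union> {x. (0,1) \<bullet> x = th2} \<union> {x. (1,0) \<bullet> x = 2*pi}"
      by (auto simp: A_def C_def cbox_Pair_eq inner_Pair)
    moreover have "negligible ({x::real \<times> real. (0,1) \<bullet> x = th1} \<union> {x. (0,1) \<bullet> x = th2}
        \<union> {x. (1,0) \<bullet> x = 2*pi})"
      by (intro negligible_Un negligible_hyperplane) (auto simp: zero_prod_def)
    ultimately show "negligible {x \<in> C - A. h x \<noteq> 0}" using negligible_subset by blast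
  qed
  finally show ?thesis by (simp add: C_def)
qed

lemma integral_divergence_eq_0:
  fixes g a b A B :: "real \<Rightarrow> real \<Rightarrow> real"
  assumes "x0 \<le> x1" "y0 \<le> y1"
    and g: "continuous_on (cbox (x0, y0) (x1, y1)) (\<lambda>(x, y). g x y)"
    and g_eq: "\<And>x y. x \<in> {x0..x1} \<Longrightarrow> y \<in> {y0<..<y1} \<Longrightarrow> g x y = a x y + b x y"
    and a: "continuous_on (cbox (x0, y0) (x1, y1)) (\<lambda>(x, y). a x y)"
    and b: "\<And>x. x \<in> {x0..x1} \<Longrightarrow> continuous_on {y0..y1} (b x)"
    and A: "\<And>x y. x \<in> {x0..x1} \<Longrightarrow> y \<in> {y0..y1} \<Longrightarrow>
              ((\<lambda>x. A x y) has_real_derivative a x y) (at x within {x0..x1})"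
    and A_periodic: "\<And>y. y \<in> {y0..y1} \<Longrightarrow> A x1 y = A x0 y"
    and B: "\<And>x y. x \<in> {x0..x1} \<Longrightarrow> y \<in> {y0<..<y1} \<Longrightarrow> (B x has_real_derivative b x y) (at y)"
    and B_cont: "\<And>x. x \<in> {x0..x1} \<Longrightarrow> continuous_on {y0..y1} (B x)"
    and B_boundary: "\<And>x. x \<in> {x0..x1} \<Longrightarrow> B x y1 = B x y0"
  shows "integral (cbox (x0, y0) (x1, y1)) (\<lambda>(x, y). g x y) = 0"
proof -
  have a_y: "continuous_on {y0..y1} (a x)" if "x \<in> {x0..x1}" for x
    by (rule continuous_on_compose2[OF a, where f = "\<lambda>y. (x, y)", simplified])
       (use that in \<open>auto intro!: continuous_intros simp: cbox_Pair_eq\<close>)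
  have inner: "integral {y0..y1} (g x) = integral {y0..y1} (a x)" if x: "x \<in> {x0..x1}" for x
  proof -
    have "integral {y0..y1} (g x) = integral {y0..y1} (\<lambda>y. a x y + b x y)"
      by (rule integral_spike[of "{y0, y1}"]) (use x g_eq in auto)
    also have "\<dots> = integral {y0..y1} (a x) + integral {y0..y1} (b x)"
      by (rule integral_add) (use a_y b x in \<open>auto intro: integrable_continuous_real\<close>)
    also have "integral {y0..y1} (b x) = B x y1 - B x y0"
      by (rule integral_unique, rule fundamental_theorem_of_calculus_interior)
         (use assms(2) B_cont B x in \<open>auto simp: has_real_derivative_iff_has_vector_derivative\<close>)
    finally show ?thesis using B_boundary x by simp
  qed
  have "integral (cbox (x0, y0) (x1, y1)) (\<lambda>(x, y). g x y)
      = integral {x0..x1} (\<lambda>x. integral {y0..y1} (g x))"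
    using integral_prod_continuous[OF g] by simp
  also have "\<dots> = integral {x0..x1} (\<lambda>x. integral {y0..y1} (a x))"
    by (rule integral_cong) (rule inner)
  also have "\<dots> = integral {y0..y1} (\<lambda>y. integral {x0..x1} (\<lambda>x. a x y))"
    using integral_swap_continuous[OF a] by simp
  also have "\<dots> = integral {y0..y1} (\<lambda>y. 0)"
  proof (rule integral_cong)
    fix y assume y: "y \<in> {y0..y1}"
    have "integral {x0..x1} (\<lambda>x. a x y) = A x1 y - A x0 y"
      by (rule integral_unique, rule fundamental_theorem_of_calculus)
         (use assms(1) A y in \<open>auto simp: has_real_derivative_iff_has_vector_derivative\<close>)
    then show "integral {x0..x1} (\<lambda>x. a x y) = 0" using A_periodic[OF y] by simp
  qed
  also have "\<dots> = 0" by simp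
  finally show ?thesis .
qed

section \<open>The energy-Casimir functional of a flow on the strip\<close>

lemma energy_casimir_flux_identity:
  fixes c u v Z q qs P Pph Pth ut vt qt uph qph qth D lam :: real
  assumes "c \<noteq> 0"
    and lamb_u: "ut = q * v - Pph / c" and lamb_v: "vt = - q * u - Pth"
    and vorticity: "c * qt + uph * q + u * qph + D * q + v * c * qth = 0"
    and incompressible: "uph + D = 0"
  shows "(- lam * (2 * (u + Z) * ut + 2 * v * vt) + 2 * (q - qs) * qt) * c
    = 2 * lam * (uph * P + (u + Z) * Pph) - uph * q\<^sup>2 - 2 * u * q * qph + 2 * qs * (uph * q + u * qph)
      + (D * (2 * lam * P - q\<^sup>2 + 2 * qs * q)
         + c * v * (2 * lam * Pth - 2 * q * qth - 2 * lam * Z * q + 2 * qs * qth))"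
proof -
  have D: "D = - uph" using incompressible by simp
  have qt: "qt = - (uph * q + u * qph + D * q + v * c * qth) / c"
    using vorticity \<open>c \<noteq> 0\<close> by (simp add: field_simps)
  show ?thesis
    unfolding lamb_u lamb_v qt D using \<open>c \<noteq> 0\<close> by (simp add: field_simps power2_eq_square)
qed

locale rotating_strip_flow =
  fixes om th1 th2 lam Ups :: real and Psi Z :: "real \<Rightarrow> real"
    and u v p :: "real \<Rightarrow> real \<Rightarrow> real \<Rightarrow> real" and U :: "pt3 set"
  assumes th_bounds: "- (pi/2) < th1" "th1 < th2" "th2 < 0"
    and Psi_cont: "continuous_on {th1..th2} Psi"
    and Psi_diff: "\<forall>th\<in>{th1<..<th2}. Psi differentiable (at th)"
    and Psi_diff2: "\<forall>th\<in>{th1<..<th2}. (\<lambda>s. deriv Psi s * cos s) differentiable (at th)"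
    and Psi_ode: "\<forall>th\<in>{th1<..<th2}. deriv (\<lambda>s. deriv Psi s * cos s) th
                    = - lam * Psi th * cos th + Ups * cos th - om * sin (2 * th)"
    and Z_cont: "continuous_on {th1..th2} Z"
    and Z_eq: "\<And>th. th \<in> {th1<..<th2} \<Longrightarrow> deriv Psi th = Z th"
    and U_cover: "{(t, ph, th). 0 \<le> t \<and> th1 \<le> th \<and> th \<le> th2} \<subseteq> U"
    and u_smooth: "smooth3_on U (\<lambda>(t, ph, th). u t ph th)"
    and v_smooth: "smooth3_on U (\<lambda>(t, ph, th). v t ph th)"
    and p_smooth: "smooth3_on U (\<lambda>(t, ph, th). p t ph th)"
    and periodic: "\<forall>t ph th. u t (ph + 2*pi) th = u t ph th \<and> v t (ph + 2*pi) th = v t ph th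
                               \<and> p t (ph + 2*pi) th = p t ph th"
    and eq1: "\<forall>t>0. \<forall>ph. \<forall>th\<in>{th1<..<th2}.
        d_t u t ph th + u t ph th * d_phi u t ph th / cos th + v t ph th * d_theta u t ph th
        - u t ph th * v t ph th * tan th - 2 * om * v t ph th * sin th
        = - d_phi p t ph th / cos th"
    and eq2: "\<forall>t>0. \<forall>ph. \<forall>th\<in>{th1<..<th2}.
        d_t v t ph th + u t ph th * d_phi v t ph th / cos th + v t ph th * d_theta v t ph th
        + (u t ph th)\<^sup>2 * tan th + 2 * om * u t ph th * sin th
        = - d_theta p t ph th"
    and eq3: "\<forall>t>0. \<forall>ph. \<forall>th\<in>{th1<..<th2}.
        d_phi u t ph th + deriv (\<lambda>s. v t ph s * cos s) th = 0"
    and bc: "\<forall>t\<ge>0. \<forall>ph. v t ph th1 = 0 \<and> v t ph th2 = 0"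
begin

definition "Fu = (\<lambda>(t, ph, th). u t ph th)"
definition "Fv = (\<lambda>(t, ph, th). v t ph th)"
definition "Fp = (\<lambda>(t, ph, th). p t ph th)"

lemma cos_pos: "th \<in> {th1..th2} \<Longrightarrow> cos th > 0"
  using th_bounds by (intro cos_gt_zero_pi) auto

lemma cos_nonzero: "th \<in> {th1..th2} \<Longrightarrow> cos th \<noteq> 0"
  using cos_pos by force

lemma in_U: "0 \<le> t \<Longrightarrow> th \<in> {th1..th2} \<Longrightarrow> (t, ph, th) \<in> U"
  using U_cover by auto

definition smooth_periodic :: "(pt3 \<Rightarrow> real) \<Rightarrow> bool" where
  "smooth_periodic F \<longleftrightarrow> smooth3_on U F \<and> (\<forall>t ph th. F (t, ph + 2*pi, th) = F (t, ph, th))"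

lemma smooth_periodic_pdiff3:
  assumes F: "smooth_periodic F" and i: "i \<le> 2"
  shows "smooth_periodic (pdiff3 i F)"
proof -
  have "F ((t, ph + 2*pi, th) + s *\<^sub>R dir3 i) = F ((t, ph, th) + s *\<^sub>R dir3 i)" for t ph th s
  proof -
    obtain a b c where "(t, ph, th) + s *\<^sub>R dir3 i = (a, b, c)" by (metis prod_cases3)
    moreover have "(t, ph + 2*pi, th) + s *\<^sub>R dir3 i = (a, b + 2*pi, c)"
      using calculation by (cases "dir3 i") auto
    ultimately show ?thesis using F by (simp add: smooth_periodic_def)
  qed
  then show ?thesis
    using F i smooth3_on_pdiff3 by (simp add: smooth_periodic_def pdiff3_def)
qed

lemma smooth_periodic_intros:
  "smooth_periodic Fu" "smooth_periodic Fv" "smooth_periodic Fp"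
  "smooth_periodic F \<Longrightarrow> smooth_periodic (Dt F)"
  "smooth_periodic F \<Longrightarrow> smooth_periodic (Dph F)"
  "smooth_periodic F \<Longrightarrow> smooth_periodic (Dth F)"
  using u_smooth v_smooth p_smooth periodic smooth_periodic_pdiff3
  by (auto simp: smooth_periodic_def Fu_def Fv_def Fp_def)

lemma smooth_periodic_periodic: "smooth_periodic F \<Longrightarrow> F (t, ph + 2*pi, th) = F (t, ph, th)"
  by (simp add: smooth_periodic_def)

lemma smooth_periodic_pdiff3_commute:
  "smooth_periodic F \<Longrightarrow> 0 \<le> t \<Longrightarrow> th \<in> {th1..th2} \<Longrightarrow> i \<le> 2 \<Longrightarrow> j \<le> 2 \<Longrightarrow>
    pdiff3 i (pdiff3 j F) (t, ph, th) = pdiff3 j (pdiff3 i F) (t, ph, th)"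
  by (rule pdiff3_commute) (auto simp: smooth_periodic_def in_U)

context
  fixes F :: "pt3 \<Rightarrow> real" and t ph th :: real
  assumes F: "smooth_periodic F" and t: "0 \<le> t" and th: "th \<in> {th1..th2}"
begin

lemma smooth_periodic_differentiable: "F differentiable (at (t, ph, th))"
  using F in_U[OF t th] smooth3_on_imp_differentiable by (auto simp: smooth_periodic_def)

lemma has_real_derivative_Dt: "((\<lambda>s. F (s, ph, th)) has_real_derivative Dt F (t, ph, th)) (at t)"
  using has_real_derivative_pdiff3[of F "(0, ph, th)" t 0] smooth_periodic_differentiable by simp

lemma has_real_derivative_Dph: "((\<lambda>s. F (t, s, th)) has_real_derivative Dph F (t, ph, th)) (at ph)"
  using has_real_derivative_pdiff3[of F "(t, 0, th)" ph 1] smooth_periodic_differentiable by simp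

lemma has_real_derivative_Dth: "((\<lambda>s. F (t, ph, s)) has_real_derivative Dth F (t, ph, th)) (at th)"
  using has_real_derivative_pdiff3[of F "(t, ph, 0)" th 2] smooth_periodic_differentiable by simp

end

lemma curried_partials_eq_pdiff3:
  assumes "smooth_periodic F" "\<And>t ph th. F (t, ph, th) = f t ph th" "0 \<le> t" "th \<in> {th1..th2}"
  shows "d_t f t ph th = Dt F (t, ph, th)" "d_phi f t ph th = Dph F (t, ph, th)"
    "d_theta f t ph th = Dth F (t, ph, th)"
  using has_real_derivative_Dt[OF assms(1,3,4)] has_real_derivative_Dph[OF assms(1,3,4)]
    has_real_derivative_Dth[OF assms(1,3,4)]
  by (auto simp: d_t_def d_phi_def d_theta_def assms(2) intro!: DERIV_imp_deriv)

(* By the ODE for Psi, this is the absolute vorticity of the steady zonal flow u_star = - Psi'. *)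
definition "q_star th = - lam * Psi th + Ups"

definition "absvort x = (Dph Fv x - Dth Fu x * cos (lat x) + Fu x * sin (lat x)) / cos (lat x)
  + 2 * om * sin (lat x)"
definition "absvort_t x = (Dt (Dph Fv) x - Dt (Dth Fu) x * cos (lat x) + Dt Fu x * sin (lat x)) / cos (lat x)"
definition "absvort_phi x =
  (Dph (Dph Fv) x - Dph (Dth Fu) x * cos (lat x) + Dph Fu x * sin (lat x)) / cos (lat x)"
definition "absvort_theta x =
  (Dth (Dph Fv) x - Dth (Dth Fu) x * cos (lat x) + 2 * Dth Fu x * sin (lat x) + Fu x * cos (lat x))
    / cos (lat x)
  + (Dph Fv x - Dth Fu x * cos (lat x) + Fu x * sin (lat x)) * sin (lat x) / (cos (lat x))\<^sup>2
  + 2 * om * cos (lat x)"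

lemma absvort_has_real_derivative:
  assumes "0 \<le> t" "th \<in> {th1..th2}"
  shows "((\<lambda>s. absvort (s, ph, th)) has_real_derivative absvort_t (t, ph, th)) (at t)"
    and "((\<lambda>s. absvort (t, s, th)) has_real_derivative absvort_phi (t, ph, th)) (at ph)"
    and "((\<lambda>s. absvort (t, ph, s)) has_real_derivative absvort_theta (t, ph, th)) (at th)"
proof -
  note D = has_real_derivative_Dt[OF _ assms] has_real_derivative_Dph[OF _ assms]
    has_real_derivative_Dth[OF _ assms]
  have c: "cos th \<noteq> 0" using cos_nonzero assms by blast
  show "((\<lambda>s. absvort (s, ph, th)) has_real_derivative absvort_t (t, ph, th)) (at t)"
    unfolding absvort_def snd_conv
    by (rule derivative_eq_intros D smooth_periodic_intros refl | simp add: c)+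
       (simp add: absvort_t_def c field_simps)
  show "((\<lambda>s. absvort (t, s, th)) has_real_derivative absvort_phi (t, ph, th)) (at ph)"
    unfolding absvort_def snd_conv
    by (rule derivative_eq_intros D smooth_periodic_intros refl | simp add: c)+
       (simp add: absvort_phi_def c field_simps)
  show "((\<lambda>s. absvort (t, ph, s)) has_real_derivative absvort_theta (t, ph, th)) (at th)"
    unfolding absvort_def snd_conv
    by (rule derivative_eq_intros D smooth_periodic_intros refl | simp add: c)+
       (simp add: absvort_theta_def c field_simps power2_eq_square)
qed

definition "bernoulli x = Fp x + ((Fu x)\<^sup>2 + (Fv x)\<^sup>2) / 2"
definition "bernoulli_phi x = Dph Fp x + Fu x * Dph Fu x + Fv x * Dph Fv x"
definition "bernoulli_theta x = Dth Fp x + Fu x * Dth Fu x + Fv x * Dth Fv x"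

lemma partials_u: "d_t u t ph th = Dt Fu (t, ph, th)" "d_phi u t ph th = Dph Fu (t, ph, th)"
    "d_theta u t ph th = Dth Fu (t, ph, th)"
  and partials_v: "d_t v t ph th = Dt Fv (t, ph, th)" "d_phi v t ph th = Dph Fv (t, ph, th)"
    "d_theta v t ph th = Dth Fv (t, ph, th)"
  and partials_p: "d_phi p t ph th = Dph Fp (t, ph, th)" "d_theta p t ph th = Dth Fp (t, ph, th)"
  if "0 \<le> t" "th \<in> {th1..th2}"
  using curried_partials_eq_pdiff3[OF smooth_periodic_intros(1) _ that, of u]
    curried_partials_eq_pdiff3[OF smooth_periodic_intros(2) _ that, of v]
    curried_partials_eq_pdiff3[OF smooth_periodic_intros(3) _ that, of p]
  by (simp_all add: Fu_def Fv_def Fp_def)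

lemma lamb_form:
  assumes "0 < t" "th \<in> {th1<..<th2}"
  shows "Dt Fu (t, ph, th) = absvort (t, ph, th) * Fv (t, ph, th) - bernoulli_phi (t, ph, th) / cos th"
    and "Dt Fv (t, ph, th) = - absvort (t, ph, th) * Fu (t, ph, th) - bernoulli_theta (t, ph, th)"
proof -
  have t: "0 \<le> t" and th: "th \<in> {th1..th2}" using assms by auto
  have c: "cos th \<noteq> 0" using cos_nonzero th by blast
  have uv: "u t ph th = Fu (t, ph, th)" "v t ph th = Fv (t, ph, th)" by (simp_all add: Fu_def Fv_def)
  have ut: "Dt Fu (t, ph, th) = - Fu (t, ph, th) * Dph Fu (t, ph, th) / cos th - Fv (t, ph, th) * Dth Fu (t, ph, th)
      + Fu (t, ph, th) * Fv (t, ph, th) * tan th + 2 * om * Fv (t, ph, th) * sin th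
      - Dph Fp (t, ph, th) / cos th"
    using eq1[rule_format, OF assms, where ph = ph]
    unfolding partials_u[OF t th] partials_p[OF t th] uv by linarith
  show "Dt Fu (t, ph, th) = absvort (t, ph, th) * Fv (t, ph, th) - bernoulli_phi (t, ph, th) / cos th"
    unfolding ut using c by (simp add: absvort_def bernoulli_phi_def tan_def field_simps)
  have vt: "Dt Fv (t, ph, th) = - Fu (t, ph, th) * Dph Fv (t, ph, th) / cos th - Fv (t, ph, th) * Dth Fv (t, ph, th)
      - (Fu (t, ph, th))\<^sup>2 * tan th - 2 * om * Fu (t, ph, th) * sin th - Dth Fp (t, ph, th)"
    using eq2[rule_format, OF assms, where ph = ph]
    unfolding partials_v[OF t th] partials_p[OF t th] uv by linarith
  show "Dt Fv (t, ph, th) = - absvort (t, ph, th) * Fu (t, ph, th) - bernoulli_theta (t, ph, th)"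
    unfolding vt using c by (simp add: absvort_def bernoulli_theta_def tan_def field_simps power2_eq_square)
qed

lemma incompressibility:
  assumes "0 < t" "th \<in> {th1<..<th2}"
  shows "Dph Fu (t, ph, th) + Dth Fv (t, ph, th) * cos th - Fv (t, ph, th) * sin th = 0"
proof -
  have t: "0 \<le> t" and th: "th \<in> {th1..th2}" using assms by auto
  have "((\<lambda>s. v t ph s * cos s) has_real_derivative Dth Fv (t, ph, th) * cos th - Fv (t, ph, th) * sin th)
      (at th)"
    using has_real_derivative_Dth[OF smooth_periodic_intros(2) t th, of ph]
    by (auto intro!: derivative_eq_intros simp: Fv_def)
  then show ?thesis
    using eq3[rule_format, OF assms, where ph = ph] partials_u[OF t th]
    by (simp add: DERIV_imp_deriv)
qed

context
  fixes t ph th :: real and x :: pt3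
  assumes t: "0 < t" and th: "th \<in> {th1<..<th2}" and x: "x = (t, ph, th)"
begin

lemma lamb_form_phi_dtheta:
  "Dt (Dth Fu) x * cos th - Dt Fu x * sin th
    = absvort_theta x * Fv x * cos th + absvort x * (Dth Fv x * cos th - Fv x * sin th)
      - (Dth (Dph Fp) x + Dth Fu x * Dph Fu x + Fu x * Dth (Dph Fu) x
         + Dth Fv x * Dph Fv x + Fv x * Dth (Dph Fv) x)"
proof (rule DERIV_unique_on_open[where S = "{th1<..<th2}"])
  have t': "0 \<le> t" and th': "th \<in> {th1..th2}" using t th by auto
  note D = has_real_derivative_Dth[OF _ t' th'] absvort_has_real_derivative(3)[OF t' th']
  show "((\<lambda>s. Dt Fu (t, ph, s) * cos s) has_real_derivative
      Dt (Dth Fu) x * cos th - Dt Fu x * sin th) (at th)"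
    unfolding x
    by (rule derivative_eq_intros D smooth_periodic_intros refl)+
       (simp add: smooth_periodic_pdiff3_commute[OF _ t' th', of _ 2 0] smooth_periodic_intros)
  show "((\<lambda>s. absvort (t, ph, s) * Fv (t, ph, s) * cos s - bernoulli_phi (t, ph, s)) has_real_derivative
      absvort_theta x * Fv x * cos th + absvort x * (Dth Fv x * cos th - Fv x * sin th)
      - (Dth (Dph Fp) x + Dth Fu x * Dph Fu x + Fu x * Dth (Dph Fu) x
         + Dth Fv x * Dph Fv x + Fv x * Dth (Dph Fv) x)) (at th)"
    unfolding x bernoulli_phi_def
    by (rule derivative_eq_intros D smooth_periodic_intros refl)+ (simp add: algebra_simps)
  show "Dt Fu (t, ph, s) * cos s = absvort (t, ph, s) * Fv (t, ph, s) * cos s - bernoulli_phi (t, ph, s)"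
    if "s \<in> {th1<..<th2}" for s
    using lamb_form(1)[OF t that, of ph] cos_nonzero[of s] that by (simp add: field_simps)
qed (use th in auto)

lemma lamb_form_theta_dphi:
  "Dt (Dph Fv) x
    = - (absvort_phi x * Fu x + absvort x * Dph Fu x)
      - (Dph (Dth Fp) x + Dph Fu x * Dth Fu x + Fu x * Dph (Dth Fu) x
         + Dph Fv x * Dth Fv x + Fv x * Dph (Dth Fv) x)"
proof (rule DERIV_unique_on_open[where S = UNIV])
  have t': "0 \<le> t" and th': "th \<in> {th1..th2}" using t th by auto
  note D = has_real_derivative_Dph[OF _ t' th'] absvort_has_real_derivative(2)[OF t' th']
  show "((\<lambda>s. Dt Fv (t, s, th)) has_real_derivative Dt (Dph Fv) x) (at ph)"
    using D(1)[of "Dt Fv" ph] smooth_periodic_pdiff3_commute[OF _ t' th', of Fv 0 "Suc 0"]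
    by (simp add: smooth_periodic_intros x)
  show "((\<lambda>s. - absvort (t, s, th) * Fu (t, s, th) - bernoulli_theta (t, s, th)) has_real_derivative
      - (absvort_phi x * Fu x + absvort x * Dph Fu x)
      - (Dph (Dth Fp) x + Dph Fu x * Dth Fu x + Fu x * Dph (Dth Fu) x
         + Dph Fv x * Dth Fv x + Fv x * Dph (Dth Fv) x)) (at ph)"
    unfolding x bernoulli_theta_def
    by (rule derivative_eq_intros D smooth_periodic_intros refl)+ (simp add: algebra_simps)
qed (use lamb_form(2)[OF t th] in auto)

lemma absvort_transport:
  "cos th * absvort_t x + Dph Fu x * absvort x + Fu x * absvort_phi x
    + (Dth Fv x * cos th - Fv x * sin th) * absvort x + Fv x * cos th * absvort_theta x = 0"
proof -
  have t': "0 \<le> t" and th': "th \<in> {th1..th2}" using t th by auto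
  have "cos th * absvort_t x = Dt (Dph Fv) x - (Dt (Dth Fu) x * cos th - Dt Fu x * sin th)"
    using cos_nonzero[OF th'] by (simp add: absvort_t_def x field_simps)
  \<comment> \<open>The mixed partials of the Bernoulli function cancel by symmetry of second derivatives.\<close>
  then show ?thesis
    using lamb_form_phi_dtheta lamb_form_theta_dphi
      smooth_periodic_pdiff3_commute[OF _ t' th', of _ 2 "Suc 0"]
    by (simp add: smooth_periodic_intros x algebra_simps)
qed

end

definition "kinetic_density x = ((Fu x + Z (lat x))\<^sup>2 + (Fv x)\<^sup>2) * cos (lat x)"
definition "enstrophy_density x = (absvort x - q_star (lat x))\<^sup>2 * cos (lat x)"
definition "energy_casimir_density_t x =
  (- lam * (2 * (Fu x + Z (lat x)) * Dt Fu x + 2 * Fv x * Dt Fv x)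
   + 2 * (absvort x - q_star (lat x)) * absvort_t x) * cos (lat x)"

definition "flux_phi x =
  2 * lam * (Fu x + Z (lat x)) * bernoulli x - Fu x * (absvort x)\<^sup>2 + 2 * q_star (lat x) * Fu x * absvort x"
definition "flux_phi_dphi x =
  2 * lam * (Dph Fu x * bernoulli x + (Fu x + Z (lat x)) * bernoulli_phi x)
  - Dph Fu x * (absvort x)\<^sup>2 - 2 * Fu x * absvort x * absvort_phi x
  + 2 * q_star (lat x) * (Dph Fu x * absvort x + Fu x * absvort_phi x)"
definition "flux_theta x =
  cos (lat x) * Fv x * (2 * lam * bernoulli x - (absvort x)\<^sup>2 + 2 * q_star (lat x) * absvort x)"
definition "flux_theta_dtheta x =
  (Dth Fv x * cos (lat x) - Fv x * sin (lat x))
    * (2 * lam * bernoulli x - (absvort x)\<^sup>2 + 2 * q_star (lat x) * absvort x)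
  + cos (lat x) * Fv x * (2 * lam * bernoulli_theta x - 2 * absvort x * absvort_theta x
      - 2 * lam * Z (lat x) * absvort x + 2 * q_star (lat x) * absvort_theta x)"

lemma energy_casimir_density_t_eq_divergence:
  assumes "0 < t" "th \<in> {th1<..<th2}"
  shows "energy_casimir_density_t (t, ph, th) = flux_phi_dphi (t, ph, th) + flux_theta_dtheta (t, ph, th)"
proof -
  have c: "cos th \<noteq> 0" using cos_nonzero assms by auto
  have incompressible: "Dph Fu (t, ph, th) + (Dth Fv (t, ph, th) * cos th - Fv (t, ph, th) * sin th) = 0"
    using incompressibility[OF assms, of ph] by simp
  show ?thesis
    using energy_casimir_flux_identity[OF c lamb_form[OF assms, of ph] absvort_transport[OF assms refl] incompressible,
        of lam "Z th" "q_star th" "bernoulli (t, ph, th)"]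
    by (simp add: energy_casimir_density_t_def flux_phi_dphi_def flux_theta_dtheta_def bernoulli_theta_def
        mult.commute mult.left_commute)
qed

lemma q_star_has_real_derivative: "th \<in> {th1<..<th2} \<Longrightarrow> (q_star has_real_derivative - lam * Z th) (at th)"
  using Psi_diff Z_eq unfolding q_star_def
  by (auto intro!: derivative_eq_intros simp: DERIV_deriv_iff_real_differentiable[symmetric])

lemma flux_phi_has_real_derivative:
  assumes "0 \<le> t" "th \<in> {th1..th2}"
  shows "((\<lambda>s. flux_phi (t, s, th)) has_real_derivative flux_phi_dphi (t, ph, th)) (at ph)"
proof -
  note D = has_real_derivative_Dph[OF _ assms] absvort_has_real_derivative(2)[OF assms]
  show ?thesis
    unfolding flux_phi_def bernoulli_def snd_conv
    by (rule derivative_eq_intros D smooth_periodic_intros refl | simp)+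
       (simp add: flux_phi_dphi_def bernoulli_def bernoulli_phi_def algebra_simps power2_eq_square)
qed

lemma flux_theta_has_real_derivative:
  assumes "0 \<le> t" "th \<in> {th1<..<th2}"
  shows "((\<lambda>s. flux_theta (t, ph, s)) has_real_derivative flux_theta_dtheta (t, ph, th)) (at th)"
proof -
  have t: "0 \<le> t" and th: "th \<in> {th1..th2}" using assms by auto
  note D = has_real_derivative_Dth[OF _ t th] absvort_has_real_derivative(3)[OF t th]
    q_star_has_real_derivative[OF assms(2)]
  show ?thesis
    unfolding flux_theta_def bernoulli_def snd_conv
    by (rule derivative_eq_intros D smooth_periodic_intros refl | simp)+
       (simp add: flux_theta_dtheta_def bernoulli_def bernoulli_theta_def algebra_simps power2_eq_square)
qed

lemma flux_phi_periodic: "flux_phi (t, 2*pi, th) = flux_phi (t, 0, th)"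
proof -
  have "F (t, 2*pi, th) = F (t, 0, th)" if "smooth_periodic F" for F
    using smooth_periodic_periodic[OF that, of t 0 th] by simp
  note periodic = this[OF smooth_periodic_intros(1)] this[OF smooth_periodic_intros(2)]
    this[OF smooth_periodic_intros(3)] this[OF smooth_periodic_intros(5)[OF smooth_periodic_intros(2)]]
    this[OF smooth_periodic_intros(6)[OF smooth_periodic_intros(1)]]
  show ?thesis by (simp add: flux_phi_def bernoulli_def absvort_def periodic[simplified])
qed

lemma flux_theta_boundary: "0 \<le> t \<Longrightarrow> flux_theta (t, ph, th1) = 0 \<and> flux_theta (t, ph, th2) = 0"
  using bc by (simp add: flux_theta_def Fv_def)

lemma continuous_on_Z_q_star [continuous_intros]:
  assumes "continuous_on S f" "\<And>z. z \<in> S \<Longrightarrow> f z \<in> {th1..th2}"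
  shows "continuous_on S (\<lambda>z. Z (f z))" "continuous_on S (\<lambda>z. q_star (f z))"
proof -
  have "f ` S \<subseteq> {th1..th2}" using assms(2) by auto
  then show "continuous_on S (\<lambda>z. Z (f z))" "continuous_on S (\<lambda>z. q_star (f z))"
    using continuous_on_compose2[OF Z_cont assms(1)] continuous_on_compose2[OF Psi_cont assms(1)]
    by (auto simp: q_star_def intro!: continuous_intros)
qed

definition "strip = cbox (0, th1) (2*pi, th2)"

lemma mem_strip: "(ph, th) \<in> strip \<longleftrightarrow> ph \<in> {0..2*pi} \<and> th \<in> {th1..th2}"
  by (auto simp: strip_def cbox_Pair_eq)

lemma continuous_on_field:
  assumes "smooth_periodic F" shows "continuous_on ({0..} \<times> strip) F"
  by (rule continuous_on_subset[OF smooth3_on_imp_continuous_on])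
     (use assms in_U in \<open>auto simp: smooth_periodic_def strip_def cbox_Pair_eq\<close>)

(* Only these instances are continuity rules: a rule for an arbitrary smooth_periodic F would,
   by higher-order unification, match every continuity goal. *)
lemma continuous_on_field_intros [continuous_intros]:
  "continuous_on ({0..} \<times> strip) Fu" "continuous_on ({0..} \<times> strip) Fv" "continuous_on ({0..} \<times> strip) Fp"
  "smooth_periodic F \<Longrightarrow> continuous_on ({0..} \<times> strip) (Dt F)"
  "smooth_periodic F \<Longrightarrow> continuous_on ({0..} \<times> strip) (Dph F)"
  "smooth_periodic F \<Longrightarrow> continuous_on ({0..} \<times> strip) (Dth F)"
  by (intro continuous_on_field smooth_periodic_intros; assumption)+

lemma continuous_on_densities_and_fluxes:
  "continuous_on ({0..} \<times> strip) kinetic_density"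
  "continuous_on ({0..} \<times> strip) enstrophy_density"
  "continuous_on ({0..} \<times> strip) energy_casimir_density_t"
  "continuous_on ({0..} \<times> strip) flux_phi_dphi"
  "continuous_on ({0..} \<times> strip) flux_theta"
  "continuous_on ({0..} \<times> strip) flux_theta_dtheta"
  unfolding atomize_conj
  unfolding kinetic_density_def[abs_def] enstrophy_density_def[abs_def]
      energy_casimir_density_t_def[abs_def] flux_phi_dphi_def[abs_def] flux_theta_def[abs_def]
      flux_theta_dtheta_def[abs_def] bernoulli_def bernoulli_phi_def bernoulli_theta_def
      absvort_def absvort_t_def absvort_phi_def absvort_theta_def
  by (intro conjI continuous_intros smooth_periodic_intros) (auto simp: mem_strip cos_nonzero)

lemma continuous_on_time_slice:
  assumes G: "continuous_on ({0..} \<times> strip) G" and t: "0 \<le> t"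
  shows "continuous_on strip (\<lambda>(ph, th). G (t, ph, th))"
    and "ph \<in> {0..2*pi} \<Longrightarrow> continuous_on {th1..th2} (\<lambda>th. G (t, ph, th))"
proof -
  have "continuous_on strip (\<lambda>y. G (t, y))"
    by (rule continuous_on_compose2[OF G]) (use t in \<open>auto intro!: continuous_intros\<close>)
  then show "continuous_on strip (\<lambda>(ph, th). G (t, ph, th))" by (simp add: split_beta)
  show "continuous_on {th1..th2} (\<lambda>th. G (t, ph, th))" if "ph \<in> {0..2*pi}"
    by (rule continuous_on_compose2[OF G]) (use t that in \<open>auto intro!: continuous_intros simp: mem_strip\<close>)
qed

definition "energy_casimir t =
  integral strip (\<lambda>(ph, th). - lam * kinetic_density (t, ph, th) + enstrophy_density (t, ph, th))"

lemma energy_casimir_integrand_has_real_derivative: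
  assumes "0 \<le> t" "th \<in> {th1..th2}"
  shows "((\<lambda>s. - lam * kinetic_density (s, ph, th) + enstrophy_density (s, ph, th)) has_real_derivative
    energy_casimir_density_t (t, ph, th)) (at t)"
proof -
  note D = has_real_derivative_Dt[OF _ assms] absvort_has_real_derivative(1)[OF assms]
  show ?thesis
    unfolding kinetic_density_def enstrophy_density_def snd_conv
    by (rule derivative_eq_intros D smooth_periodic_intros refl)+
       (simp add: energy_casimir_density_t_def algebra_simps power2_eq_square)
qed

lemma energy_casimir_has_real_derivative:
  assumes "0 \<le> t"
  shows "(energy_casimir has_real_derivative
    integral strip (\<lambda>(ph, th). energy_casimir_density_t (t, ph, th))) (at t within {0..})"
  unfolding energy_casimir_def strip_def
proof (rule leibniz_rule_field_derivative)
  fix s :: real and y :: "real \<times> real"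
  assume "s \<in> {0..}" "y \<in> cbox (0, th1) (2*pi, th2)"
  then show "((\<lambda>s. case y of (ph, th) \<Rightarrow> - lam * kinetic_density (s, ph, th) + enstrophy_density (s, ph, th))
      has_real_derivative (case y of (ph, th) \<Rightarrow> energy_casimir_density_t (s, ph, th))) (at s within {0..})"
    using energy_casimir_integrand_has_real_derivative
    by (auto simp: cbox_Pair_eq split: prod.split intro: has_field_derivative_at_within)
next
  fix s :: real assume "s \<in> {0..}"
  then show "(\<lambda>(ph, th). - lam * kinetic_density (s, ph, th) + enstrophy_density (s, ph, th))
      integrable_on cbox (0, th1) (2*pi, th2)"
    using continuous_on_time_slice[OF continuous_on_densities_and_fluxes(1)]
      continuous_on_time_slice[OF continuous_on_densities_and_fluxes(2)]
    by (intro integrable_continuous) (auto simp: strip_def split_beta intro!: continuous_intros)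
next
  have "(\<lambda>(s, y). case y of (ph, th) \<Rightarrow> energy_casimir_density_t (s, ph, th)) = energy_casimir_density_t"
    by auto
  then show "continuous_on ({0..} \<times> cbox (0, th1) (2*pi, th2))
      (\<lambda>(s, y). case y of (ph, th) \<Rightarrow> energy_casimir_density_t (s, ph, th))"
    using continuous_on_densities_and_fluxes(3) by (simp add: strip_def)
qed (use assms in auto)

lemma integral_energy_casimir_density_t_eq_0:
  assumes "0 < t"
  shows "integral strip (\<lambda>(ph, th). energy_casimir_density_t (t, ph, th)) = 0"
  unfolding strip_def
proof (rule integral_divergence_eq_0[where a = "\<lambda>ph th. flux_phi_dphi (t, ph, th)"
      and b = "\<lambda>ph th. flux_theta_dtheta (t, ph, th)" and A = "\<lambda>ph th. flux_phi (t, ph, th)"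
      and B = "\<lambda>ph th. flux_theta (t, ph, th)"])
  have t: "0 \<le> t" using assms by simp
  note slice = continuous_on_time_slice[OF continuous_on_densities_and_fluxes(3) t]
    continuous_on_time_slice[OF continuous_on_densities_and_fluxes(4) t]
    continuous_on_time_slice(2)[OF continuous_on_densities_and_fluxes(5) t]
    continuous_on_time_slice(2)[OF continuous_on_densities_and_fluxes(6) t]
  show "continuous_on (cbox (0, th1) (2*pi, th2)) (\<lambda>(ph, th). energy_casimir_density_t (t, ph, th))"
    "continuous_on (cbox (0, th1) (2*pi, th2)) (\<lambda>(ph, th). flux_phi_dphi (t, ph, th))"
    using slice by (simp_all add: strip_def)
  show "energy_casimir_density_t (t, ph, th) = flux_phi_dphi (t, ph, th) + flux_theta_dtheta (t, ph, th)"
    if "th \<in> {th1<..<th2}" for ph th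
    by (rule energy_casimir_density_t_eq_divergence[OF assms that])
  show "((\<lambda>ph. flux_phi (t, ph, th)) has_real_derivative flux_phi_dphi (t, ph, th)) (at ph within {0..2*pi})"
    if "th \<in> {th1..th2}" for ph th
    using flux_phi_has_real_derivative[OF t that] by (rule has_field_derivative_at_within)
  show "((\<lambda>th. flux_theta (t, ph, th)) has_real_derivative flux_theta_dtheta (t, ph, th)) (at th)"
    if "th \<in> {th1<..<th2}" for ph th
    by (rule flux_theta_has_real_derivative[OF t that])
  show "continuous_on {th1..th2} (\<lambda>th. flux_theta (t, ph, th))"
    "continuous_on {th1..th2} (\<lambda>th. flux_theta_dtheta (t, ph, th))" if "ph \<in> {0..2*pi}" for ph
    using slice that by simp_all
  show "flux_theta (t, ph, th2) = flux_theta (t, ph, th1)" for ph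
    using flux_theta_boundary[OF t] by simp
qed (use th_bounds flux_phi_periodic in auto)

lemma energy_casimir_const:
  assumes "0 \<le> t"
  shows "energy_casimir t = energy_casimir 0"
proof (cases "t = 0")
  case False
  then have t: "0 < t" using assms by simp
  have "continuous_on {0..} energy_casimir"
    using energy_casimir_has_real_derivative
    by (auto simp: continuous_on_eq_continuous_within intro: DERIV_continuous)
  then have "continuous_on {0..t} energy_casimir" by (rule continuous_on_subset) auto
  then show ?thesis
  proof (rule DERIV_isconst_end[OF t])
    fix s :: real assume s: "0 < s" "s < t"
    have "at s within {0..} = at s" by (rule at_within_interior) (use s in auto)
    then show "(energy_casimir has_real_derivative 0) (at s)"
      using energy_casimir_has_real_derivative[of s] integral_energy_casimir_density_t_eq_0[of s] s by simp
  qed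
qed simp

lemma vort_eq_absvort:
  assumes "0 \<le> t" "th \<in> {th1..th2}"
  shows "vort u v t ph th = absvort (t, ph, th) - 2 * om * sin th"
proof -
  have "((\<lambda>s. u t ph s * cos s) has_real_derivative Dth Fu (t, ph, th) * cos th - Fu (t, ph, th) * sin th)
      (at th)"
    using has_real_derivative_Dth[OF smooth_periodic_intros(1) assms, of ph]
    by (auto intro!: derivative_eq_intros simp: Fu_def)
  then show ?thesis
    using partials_v[OF assms] cos_nonzero[OF assms(2)]
    by (simp add: vort_def absvort_def DERIV_imp_deriv field_simps)
qed

lemma zonal_vort_eq_q_star:
  assumes "th \<in> {th1<..<th2}"
  shows "zonal_vort (\<lambda>s. - deriv Psi s) th = q_star th - 2 * om * sin th"
proof -
  have "((\<lambda>s. - deriv Psi s * cos s) has_real_derivative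
      - (- lam * Psi th * cos th + Ups * cos th - om * sin (2 * th))) (at th)"
    using Psi_diff2 Psi_ode assms DERIV_minus[of "\<lambda>s. deriv Psi s * cos s"]
    by (fastforce simp: DERIV_deriv_iff_real_differentiable[symmetric])
  then have "deriv (\<lambda>s. - deriv Psi s * cos s) th
      = - (- lam * Psi th * cos th + Ups * cos th - om * (2 * sin th * cos th))"
    unfolding sin_double by (rule DERIV_imp_deriv)
  then show ?thesis
    using cos_nonzero[of th] assms by (simp add: zonal_vort_def q_star_def field_simps)
qed

lemma L2sq_velocity_eq:
  "0 \<le> t \<Longrightarrow> L2sq th1 th2 (\<lambda>ph th. u t ph th - (- deriv Psi th)) (\<lambda>ph th. v t ph th)
     = integral strip (\<lambda>(ph, th). kinetic_density (t, ph, th))"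
  unfolding strip_def
  by (rule L2sq_eq_integral_cbox, fold strip_def,
      rule continuous_on_time_slice[OF continuous_on_densities_and_fluxes(1)])
     (auto simp: kinetic_density_def Fu_def Fv_def Z_eq)

lemma L2sq_vorticity_eq:
  "0 \<le> t \<Longrightarrow> L2sq th1 th2 (\<lambda>ph th. vort u v t ph th - zonal_vort (\<lambda>s. - deriv Psi s) th) (\<lambda>_ _. 0)
     = integral strip (\<lambda>(ph, th). enstrophy_density (t, ph, th))"
  unfolding strip_def
  by (rule L2sq_eq_integral_cbox, fold strip_def,
      rule continuous_on_time_slice[OF continuous_on_densities_and_fluxes(2)])
     (auto simp: enstrophy_density_def vort_eq_absvort zonal_vort_eq_q_star)

lemma energy_casimir_eq:
  assumes "0 \<le> t"
  shows "energy_casimir t = - lam * integral strip (\<lambda>(ph, th). kinetic_density (t, ph, th))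
    + integral strip (\<lambda>(ph, th). enstrophy_density (t, ph, th))"
proof -
  define k where "k = (\<lambda>(ph, th). kinetic_density (t, ph, th))"
  define e where "e = (\<lambda>(ph, th). enstrophy_density (t, ph, th))"
  have k: "k integrable_on strip" and e: "e integrable_on strip"
    using continuous_on_time_slice(1)[OF continuous_on_densities_and_fluxes(1) assms]
      continuous_on_time_slice(1)[OF continuous_on_densities_and_fluxes(2) assms]
    by (auto simp: strip_def k_def e_def intro: integrable_continuous)
  have "integral strip (\<lambda>y. - lam * k y + e y) = integral strip (\<lambda>y. - lam * k y) + integral strip e"
    by (rule integral_add) (use integrable_on_mult_right[OF k, of "- lam"] e in simp_all)
  then have "integral strip (\<lambda>y. - lam * k y + e y) = - lam * integral strip k + integral strip e"
    by simp
  moreover have "(\<lambda>(ph, th). - lam * kinetic_density (t, ph, th) + enstrophy_density (t, ph, th))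
      = (\<lambda>y. - lam * k y + e y)"
    by (auto simp: k_def e_def)
  ultimately show ?thesis by (simp add: energy_casimir_def k_def e_def)
qed

theorem weighted_L2_distance_conserved:
  assumes "0 \<le> t"
  shows "- lam * L2sq th1 th2 (\<lambda>ph th. u t ph th - (- deriv Psi th)) (\<lambda>ph th. v t ph th)
         + L2sq th1 th2 (\<lambda>ph th. vort u v t ph th - zonal_vort (\<lambda>s. - deriv Psi s) th) (\<lambda>_ _. 0)
       = - lam * L2sq th1 th2 (\<lambda>ph th. u 0 ph th - (- deriv Psi th)) (\<lambda>ph th. v 0 ph th)
         + L2sq th1 th2 (\<lambda>ph th. vort u v 0 ph th - zonal_vort (\<lambda>s. - deriv Psi s) th) (\<lambda>_ _. 0)"
  using energy_casimir_const[OF assms] energy_casimir_eq[OF assms] energy_casimir_eq[of 0]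
    L2sq_velocity_eq[OF assms] L2sq_velocity_eq[of 0] L2sq_vorticity_eq[OF assms] L2sq_vorticity_eq[of 0]
  by simp

end

theorem theorem3p2:
  fixes \<omega> th1 th2 \<psi>1 \<psi>2 lam Ups :: real
    and \<Psi> :: "real \<Rightarrow> real"
    and u v p :: "real \<Rightarrow> real \<Rightarrow> real \<Rightarrow> real"
    and U :: "pt3 set"
  assumes omega_pos: "\<omega> > 0"
    and th_bounds: "- (pi/2) < th1" "th1 < th2" "th2 < 0"
    and psi_ne: "\<psi>1 \<noteq> \<psi>2"
    and lam_nonpos: "lam \<le> 0"
    \<comment> \<open>\<Psi> = \<Psi>_{lam,Ups} solves the boundary value problem\<close>
    and Psi_cont: "continuous_on {th1..th2} \<Psi>"
    and Psi_diff: "\<forall>th\<in>{th1<..<th2}. \<Psi> differentiable (at th)"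
    and Psi_diff2: "\<forall>th\<in>{th1<..<th2}. (\<lambda>s. deriv \<Psi> s * cos s) differentiable (at th)"
    and Psi_ode: "\<forall>th\<in>{th1<..<th2}. deriv (\<lambda>s. deriv \<Psi> s * cos s) th
                    = - lam * \<Psi> th * cos th + Ups * cos th - \<omega> * sin (2 * th)"
    and Psi_bc: "\<Psi> th1 = \<psi>1" "\<Psi> th2 = \<psi>2"
    \<comment> \<open>u, v, p: classical (smooth) solution, 2pi-periodic in phi\<close>
    and U_cover: "{(t, ph, th). 0 \<le> t \<and> th1 \<le> th \<and> th \<le> th2} \<subseteq> U"
    and u_smooth: "smooth3_on U (\<lambda>(t, ph, th). u t ph th)"
    and v_smooth: "smooth3_on U (\<lambda>(t, ph, th). v t ph th)"
    and p_smooth: "smooth3_on U (\<lambda>(t, ph, th). p t ph th)"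
    and periodic: "\<forall>t ph th. u t (ph + 2*pi) th = u t ph th \<and> v t (ph + 2*pi) th = v t ph th
                               \<and> p t (ph + 2*pi) th = p t ph th"
    and eq1: "\<forall>t>0. \<forall>ph. \<forall>th\<in>{th1<..<th2}.
        d_t u t ph th + u t ph th * d_phi u t ph th / cos th + v t ph th * d_theta u t ph th
        - u t ph th * v t ph th * tan th - 2 * \<omega> * v t ph th * sin th
        = - d_phi p t ph th / cos th"
    and eq2: "\<forall>t>0. \<forall>ph. \<forall>th\<in>{th1<..<th2}.
        d_t v t ph th + u t ph th * d_phi v t ph th / cos th + v t ph th * d_theta v t ph th
        + (u t ph th)\<^sup>2 * tan th + 2 * \<omega> * u t ph th * sin th
        = - d_theta p t ph th"
    and eq3: "\<forall>t>0. \<forall>ph. \<forall>th\<in>{th1<..<th2}.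
        d_phi u t ph th + deriv (\<lambda>s. v t ph s * cos s) th = 0"
    and bc: "\<forall>t\<ge>0. \<forall>ph. v t ph th1 = 0 \<and> v t ph th2 = 0"
    and t_nonneg: "t \<ge> 0"
  shows "- lam * L2sq th1 th2 (\<lambda>ph th. u t ph th - (- deriv \<Psi> th)) (\<lambda>ph th. v t ph th)
         + L2sq th1 th2 (\<lambda>ph th. vort u v t ph th - zonal_vort (\<lambda>s. - deriv \<Psi> s) th) (\<lambda>_ _. 0)
       = - lam * L2sq th1 th2 (\<lambda>ph th. u 0 ph th - (- deriv \<Psi> th)) (\<lambda>ph th. v 0 ph th)
         + L2sq th1 th2 (\<lambda>ph th. vort u v 0 ph th - zonal_vort (\<lambda>s. - deriv \<Psi> s) th) (\<lambda>_ _. 0)"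
proof -
  have cos_pos: "cos x > 0" if "x \<in> {th1..th2}" for x
    using th_bounds that by (intro cos_gt_zero_pi) auto
  \<comment> \<open>\<Psi>' need not be continuous up to the boundary, but \<Psi>' cos has a continuous derivative there.\<close>
  have d: "((\<lambda>s. deriv \<Psi> s * cos s) has_real_derivative
      - lam * \<Psi> x * cos x + Ups * cos x - \<omega> * sin (2 * x)) (at x)" if "x \<in> {th1<..<th2}" for x
    using Psi_diff2 Psi_ode that by (metis DERIV_deriv_iff_real_differentiable)
  have g: "continuous_on {th1..th2} (\<lambda>x. - lam * \<Psi> x * cos x + Ups * cos x - \<omega> * sin (2 * x))"
    by (intro continuous_intros Psi_cont)
  obtain H where H: "continuous_on {th1..th2} H"
    "\<And>x. x \<in> {th1<..<th2} \<Longrightarrow> deriv \<Psi> x * cos x = H x"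
    using continuous_extension_from_continuous_derivative[OF d g] by blast
  define Z where "Z x = H x / cos x" for x
  have "continuous_on {th1..th2} Z"
    unfolding Z_def using cos_pos by (intro continuous_intros H(1)) force
  moreover have "deriv \<Psi> x = Z x" if "x \<in> {th1<..<th2}" for x
    using H(2)[OF that] cos_pos[of x] that by (simp add: Z_def field_simps)
  ultimately interpret rotating_strip_flow \<omega> th1 th2 lam Ups \<Psi> Z u v p U
    by unfold_locales (use th_bounds Psi_cont Psi_diff Psi_diff2 Psi_ode U_cover u_smooth v_smooth
        p_smooth periodic eq1 eq2 eq3 bc in auto)
  show ?thesis by (rule weighted_L2_distance_conserved[OF t_nonneg])
qed

end
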